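(* Fix an integer $q_1\ge2$. For any positive real numbers $s,t$ and any integer $r\ge4$, $$\lim_{m\to\infty}\frac{a^{\operatorname{int2,r}}_m(t)}{m^s}=0,\qquad \lim_{m\to\infty}\frac{a^{\operatorname{int1,r}}_m(t)}{a^{\operatorname{int2,r}}_m(s)}=0,\qquad \lim_{m\to\infty}\frac{(\ln m)^t}{a^{\operatorname{int1,r}}_m(s)}=0.$$
   Context: $\Gamma$ denotes the Gamma function; for an integer $r\ge4$, $\Gamma_r:\mathbb{R}^+\to\mathbb{R}^+$ is $\Gamma_r(x)=[\Gamma(x^{1/r}+1)]^r$, which is increasing (hence invertible onto its image). Define $a^{\operatorname{int1,r}}_m(t)=m^{t/\Gamma_r^{-1}(\ln m/\ln q_1)}$ and $a^{\operatorname{int2,r}}_m(t)=m^{t/[\Gamma_r^{-1}(\ln m/\ln q_1)]^{(r-2)/r}}$ (for $m$ large enough that these are defined). *)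

theory Defs
  imports "HOL-Analysis.Analysis"
begin

definition Gamma_r :: "nat \<Rightarrow> real \<Rightarrow> real" where
  "Gamma_r r x = (Gamma (x powr (1 / real r) + 1)) ^ r"

text \<open>Inverse of Gamma_r (as a map on the positive reals); meaningful for y in the image
  where the preimage is unique, in particular for all sufficiently large y.\<close>
definition Gamma_r_inv :: "nat \<Rightarrow> real \<Rightarrow> real" where
  "Gamma_r_inv r y = (THE x. x > 0 \<and> Gamma_r r x = y)"

definition a_int1 :: "nat \<Rightarrow> nat \<Rightarrow> nat \<Rightarrow> real \<Rightarrow> real" where
  "a_int1 q1 r m t = real m powr (t / Gamma_r_inv r (ln (real m) / ln (real q1)))"

definition a_int2 :: "nat \<Rightarrow> nat \<Rightarrow> nat \<Rightarrow> real \<Rightarrow> real" where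
  "a_int2 q1 r m t = real m powr
     (t / (Gamma_r_inv r (ln (real m) / ln (real q1))) powr ((real r - 2) / real r))"

end

(*
  Write l = ln m, p = (r - 2) / r and g(l) = Gamma_r_inv r (l / ln q1). The three quotients are
  exp of l (t / g^p - s), of -(l / g) (s g^(1-p) - t) and of t ln l - s l / g, respectively.
  These tend to -infinity because g tends to infinity, but only like a power of ln l:
  Gamma (y + 1) >= 2^(y - 2) gives Gamma_r_inv r L <= (2 + log 2 L / r)^r, so l / (g(l) ln l)
  still tends to infinity.
*)
theory Submission
  imports Defs "HOL-Real_Asymp.Real_Asymp"
begin

lemma tendsto_0_if_exp_ln_exponent_at_bot:
  fixes f E :: "real \<Rightarrow> real"
  assumes "filterlim E at_bot at_top"
    and "eventually (\<lambda>x. f x = exp (E (ln x))) at_top"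
  shows "(f \<longlongrightarrow> 0) at_top"
proof -
  have "((\<lambda>x. exp (E (ln x))) \<longlongrightarrow> 0) at_top"
    using filterlim_compose[OF exp_at_bot filterlim_compose[OF assms(1) ln_at_top]] .
  then show ?thesis
    using tendsto_cong[OF assms(2)] by simp
qed

lemma powr_div_powr_eq_exp:
  fixes x :: real
  assumes "x > 0"
  shows "x powr a / x powr b = exp ((a - b) * ln x)"
  using assms by (simp add: powr_def exp_diff left_diff_distrib)

lemma powr_div_powr_tendsto_0:
  fixes G :: "real \<Rightarrow> real"
  assumes G: "filterlim G at_top at_top" and "p > 0" "s > 0"
  shows "((\<lambda>x. x powr (t / G (ln x) powr p) / x powr s) \<longlongrightarrow> 0) at_top"
proof (rule tendsto_0_if_exp_ln_exponent_at_bot)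
  have "filterlim (\<lambda>l. G l powr p) at_top at_top"
    using filterlim_compose[OF real_powr_at_top[OF \<open>p > 0\<close>] G] .
  then have "((\<lambda>l. t / G l powr p - s) \<longlongrightarrow> 0 - s) at_top"
    by (intro tendsto_diff real_tendsto_divide_at_top[OF tendsto_const] tendsto_const)
  then show "filterlim (\<lambda>l. (t / G l powr p - s) * l) at_bot at_top"
    by (rule filterlim_tendsto_neg_mult_at_bot) (use \<open>s > 0\<close> in \<open>auto simp: filterlim_ident\<close>)
  show "\<forall>\<^sub>F x in at_top. x powr (t / G (ln x) powr p) / x powr s
          = exp ((t / G (ln x) powr p - s) * ln x)"
    using eventually_gt_at_top[of 0] by eventually_elim (rule powr_div_powr_eq_exp)
qed

lemma div_at_top_if_div_mult_ln_at_top: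
  fixes G :: "real \<Rightarrow> real"
  assumes "filterlim (\<lambda>l. l / (G l * ln l)) at_top at_top"
  shows "filterlim (\<lambda>l. l / G l) at_top at_top"
proof -
  have "filterlim (\<lambda>l. l / (G l * ln l) * ln l) at_top at_top"
    using filterlim_at_top_mult_at_top[OF assms ln_at_top] .
  moreover have "\<forall>\<^sub>F l in at_top. l / (G l * ln l) * ln l = l / G l"
    using eventually_gt_at_top[of 1] by eventually_elim simp
  ultimately show ?thesis
    by (rule filterlim_cong[THEN iffD1, OF refl refl, rotated])
qed

lemma powr_div_powr_powr_tendsto_0:
  fixes G :: "real \<Rightarrow> real"
  assumes G: "filterlim G at_top at_top"
    and slow: "filterlim (\<lambda>l. l / (G l * ln l)) at_top at_top"
    and "p < 1" "s > 0"
  shows "((\<lambda>x. x powr (t / G (ln x)) / x powr (s / G (ln x) powr p)) \<longlongrightarrow> 0) at_top"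
proof (rule tendsto_0_if_exp_ln_exponent_at_bot)
  have "filterlim (\<lambda>l. - t + s * G l powr (1 - p)) at_top at_top"
    using \<open>p < 1\<close> \<open>s > 0\<close>
    by (intro filterlim_tendsto_add_at_top[OF tendsto_const]
          filterlim_tendsto_pos_mult_at_top[OF tendsto_const]
          filterlim_compose[OF real_powr_at_top G]) auto
  from filterlim_at_top_mult_at_top[OF div_at_top_if_div_mult_ln_at_top[OF slow] this]
  have "filterlim (\<lambda>l. - (l / G l * (- t + s * G l powr (1 - p)))) at_bot at_top"
    unfolding filterlim_uminus_at_top .
  moreover have "\<forall>\<^sub>F l in at_top.
      - (l / G l * (- t + s * G l powr (1 - p))) = (t / G l - s / G l powr p) * l"
    using filterlim_at_top_dense[THEN iffD1, OF G, rule_format, of 0]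
    by eventually_elim (simp add: powr_diff field_simps)
  ultimately show "filterlim (\<lambda>l. (t / G l - s / G l powr p) * l) at_bot at_top"
    by (rule filterlim_cong[THEN iffD1, OF refl refl, rotated])
  show "\<forall>\<^sub>F x in at_top. x powr (t / G (ln x)) / x powr (s / G (ln x) powr p)
          = exp ((t / G (ln x) - s / G (ln x) powr p) * ln x)"
    using eventually_gt_at_top[of 0] by eventually_elim (rule powr_div_powr_eq_exp)
qed

lemma ln_powr_div_powr_tendsto_0:
  fixes G :: "real \<Rightarrow> real"
  assumes slow: "filterlim (\<lambda>l. l / (G l * ln l)) at_top at_top" and "s > 0"
  shows "((\<lambda>x. ln x powr t / x powr (s / G (ln x))) \<longlongrightarrow> 0) at_top"
proof (rule tendsto_0_if_exp_ln_exponent_at_bot)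
  have "filterlim (\<lambda>l. - t + s * (l / (G l * ln l))) at_top at_top"
    using \<open>s > 0\<close>
    by (intro filterlim_tendsto_add_at_top[OF tendsto_const]
          filterlim_tendsto_pos_mult_at_top[OF tendsto_const _ slow]) auto
  from filterlim_at_top_mult_at_top[OF ln_at_top this]
  have "filterlim (\<lambda>l. - (ln l * (- t + s * (l / (G l * ln l))))) at_bot at_top"
    unfolding filterlim_uminus_at_top .
  moreover have "\<forall>\<^sub>F l in at_top.
      - (ln l * (- t + s * (l / (G l * ln l)))) = t * ln l - s / G l * l"
    using eventually_gt_at_top[of 1] by eventually_elim (simp add: field_simps)
  ultimately show "filterlim (\<lambda>l. t * ln l - s / G l * l) at_bot at_top"
    by (rule filterlim_cong[THEN iffD1, OF refl refl, rotated])
  show "\<forall>\<^sub>F x in at_top. ln x powr t / x powr (s / G (ln x))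
          = exp (t * ln (ln x) - s / G (ln x) * ln x)"
    using eventually_gt_at_top[of 1] by eventually_elim (simp add: powr_def exp_diff)
qed

lemma Gamma_le_1:
  fixes y :: real
  assumes "0 < y" "y \<le> 1"
  shows "Gamma (y + 1) \<le> 1"
proof -
  have "(ln \<circ> Gamma) ((1 - y) *\<^sub>R 1 + y *\<^sub>R 2)
      \<le> (1 - y) * (ln \<circ> Gamma) 1 + y * (ln \<circ> Gamma) (2 :: real)"
    using assms by (intro convex_onD[OF log_convex_Gamma_real]) auto
  moreover have "Gamma (2 :: real) = 1"
    using Gamma_fact[of 1] by simp
  ultimately have "ln (Gamma (y + 1)) \<le> 0"
    by (simp add: algebra_simps)
  then show ?thesis
    using assms by simp
qed

lemma two_power_le_fact_Suc: "(2 :: real) ^ n \<le> fact (Suc n)"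
proof (induction n)
  case (Suc n)
  have "(2 :: real) ^ Suc n = 2 * 2 ^ n" by simp
  also have "\<dots> \<le> (real n + 2) * fact (Suc n)"
    using Suc.IH by (intro mult_mono) auto
  also have "\<dots> = fact (Suc (Suc n))" by (simp add: algebra_simps)
  finally show ?case .
qed simp

lemma two_powr_le_Gamma:
  fixes y :: real
  assumes "y \<ge> 1"
  shows "2 powr (y - 2) \<le> Gamma (y + 1)"
proof -
  define n where "n = nat \<lfloor>y\<rfloor> - 1"
  have n: "real n + 1 \<le> y" "y < real n + 2"
    unfolding n_def using assms by linarith+
  have "2 powr (y - 2) \<le> 2 powr real n"
    using n by (intro powr_mono) auto
  also have "\<dots> \<le> fact (Suc n)"
    using two_power_le_fact_Suc[of n] by (simp add: powr_realpow)
  also have "\<dots> = Gamma (1 + real (Suc n))"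
    by (rule Gamma_fact[symmetric])
  also have "\<dots> \<le> Gamma (y + 1)"
    using n Gamma_real_strict_mono[of "1 + real (Suc n)" "y + 1"] by (cases "real n + 1 = y") auto
  finally show ?thesis .
qed

lemma Gamma_r_power:
  fixes y :: real
  assumes "y > 0" "r > 0"
  shows "Gamma_r r (y ^ r) = Gamma (y + 1) ^ r"
proof -
  have "(y ^ r) powr (1 / real r) = y"
    using assms by (simp add: powr_realpow[symmetric] powr_powr)
  then show ?thesis
    by (simp add: Gamma_r_def)
qed

lemma Gamma_r_le_1:
  assumes "0 < x" "x \<le> 1"
  shows "Gamma_r r x \<le> 1"
proof -
  have "x powr (1 / real r) \<le> 1"
    using assms by (intro powr_le1) auto
  then have "Gamma (x powr (1 / real r) + 1) \<le> 1"
    using assms by (intro Gamma_le_1) auto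
  moreover have "Gamma (x powr (1 / real r) + 1) \<ge> 0"
    by (intro Gamma_real_nonneg add_nonneg_pos) auto
  ultimately show ?thesis
    unfolding Gamma_r_def by (intro power_le_one)
qed

lemma Gamma_r_strict_mono:
  assumes "r > 0" "1 \<le> x" "x < y"
  shows "Gamma_r r x < Gamma_r r y"
proof -
  have "1 \<le> x powr (1 / real r)" "x powr (1 / real r) < y powr (1 / real r)"
    using assms by (auto intro: ge_one_powr_ge_zero powr_less_mono2)
  then have "Gamma (x powr (1 / real r) + 1) < Gamma (y powr (1 / real r) + 1)"
    by (intro Gamma_real_strict_mono) auto
  moreover have "Gamma (x powr (1 / real r) + 1) \<ge> 0"
    by (intro Gamma_real_nonneg add_nonneg_pos) auto
  ultimately show ?thesis
    unfolding Gamma_r_def using assms by (intro power_strict_mono) auto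
qed

lemma Gamma_r_one: "Gamma_r r 1 = 1"
  using Gamma_fact[where 'a = real, of 1] by (simp add: Gamma_r_def)

lemma Gamma_r_inv:
  assumes "r > 0" "L > 1"
  shows "Gamma_r_inv r L > 1" "Gamma_r r (Gamma_r_inv r L) = L"
proof -
  define n where "n = nat \<lceil>L\<rceil>"
  have n: "L \<le> real n" "real n \<ge> 1"
    unfolding n_def using assms by linarith+
  have "L \<le> fact n"
    using n fact_ge_self[of n] by (metis of_nat_fact of_nat_le_iff order_trans)
  also have "\<dots> \<le> (fact n :: real) ^ r"
    using assms by (intro self_le_power) auto
  also have "\<dots> = Gamma_r r (real n ^ r)"
    using Gamma_r_power[of "real n" r] Gamma_fact[where 'a = real, of n] n assms by (simp add: add.commute)
  finally have L_le: "L \<le> Gamma_r r (real n ^ r)" .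
  have "continuous_on {1..real n ^ r} (\<lambda>x. Gamma (x powr (1 / real r) + 1))"
    by (rule continuous_on_compose2[OF continuous_on_Gamma[of "{2..}"]])
       (auto intro!: continuous_intros ge_one_powr_ge_zero elim!: nonpos_Ints_cases)
  then have "continuous_on {1..real n ^ r} (Gamma_r r)"
    unfolding Gamma_r_def by (intro continuous_intros)
  then obtain x where x: "1 \<le> x" "Gamma_r r x = L"
    using IVT'[of "Gamma_r r" 1 L "real n ^ r"] L_le n assms by (auto simp: Gamma_r_one)
  have unique: "y = x" if "y > 0" "Gamma_r r y = L" for y
  proof -
    have "y > 1"
      using Gamma_r_le_1[of y r] that assms by force
    then show ?thesis
      using Gamma_r_strict_mono[of r x y] Gamma_r_strict_mono[of r y x] that x assms
      by (cases x y rule: linorder_cases) auto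
  qed
  have "Gamma_r_inv r L = x"
    unfolding Gamma_r_inv_def by (rule the_equality) (use x unique in auto)
  moreover have "x \<noteq> 1"
    using x assms by (auto simp: Gamma_r_one)
  ultimately show "Gamma_r_inv r L > 1" "Gamma_r r (Gamma_r_inv r L) = L"
    using x by auto
qed

lemma Gamma_r_inv_at_top:
  assumes "r > 0"
  shows "filterlim (Gamma_r_inv r) at_top at_top"
  unfolding filterlim_at_top
proof
  fix Z :: real
  define X where "X = max 2 Z"
  have X: "1 < Gamma_r r X"
    using Gamma_r_strict_mono[of r 1 X] assms by (simp add: X_def Gamma_r_one)
  have "Z \<le> Gamma_r_inv r L" if "L \<ge> Gamma_r r X" for L
  proof (rule ccontr)
    assume "\<not> Z \<le> Gamma_r_inv r L"
    then have "Gamma_r r (Gamma_r_inv r L) < Gamma_r r X"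
      using Gamma_r_inv(1)[of r L] X that assms
      by (intro Gamma_r_strict_mono) (auto simp: X_def)
    then show False
      using Gamma_r_inv(2)[of r L] X that assms by simp
  qed
  then show "\<forall>\<^sub>F L in at_top. Z \<le> Gamma_r_inv r L"
    unfolding eventually_at_top_linorder by blast
qed

lemma Gamma_r_inv_le:
  assumes "r > 0" "L > 1"
  shows "Gamma_r_inv r L \<le> (2 + log 2 L / real r) ^ r"
proof -
  define x where "x = Gamma_r_inv r L"
  define y where "y = x powr (1 / real r)"
  have x: "x > 1" "Gamma_r r x = L"
    using Gamma_r_inv[OF assms] unfolding x_def by auto
  have y: "y \<ge> 1" "x = y ^ r"
    using x assms by (auto simp: y_def ge_one_powr_ge_zero powr_realpow[symmetric] powr_powr)
  have "2 powr (real r * (y - 2)) = (2 powr (y - 2)) ^ r"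
    by (simp add: powr_realpow[symmetric] powr_powr mult.commute)
  also have "\<dots> \<le> Gamma (y + 1) ^ r"
    using y by (intro power_mono two_powr_le_Gamma) auto
  also have "\<dots> = L"
    using x by (simp add: Gamma_r_def y_def)
  finally have "real r * (y - 2) \<le> log 2 L"
    using assms by (simp add: le_log_iff)
  then have "y \<le> 2 + log 2 L / real r"
    using assms by (simp add: field_simps)
  then show ?thesis
    unfolding x_def[symmetric] using y by (simp add: power_mono)
qed

lemma Gamma_r_inv_slow_growth:
  assumes "r > 0" "c > 0"
  shows "filterlim (\<lambda>l. l / (Gamma_r_inv r (l / c) * ln l)) at_top at_top"
proof (rule filterlim_at_top_mono)
  show "filterlim (\<lambda>l. l / ((2 + log 2 (l / c) / real r) ^ r * ln l)) at_top at_top"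
    using assms by real_asymp
  show "\<forall>\<^sub>F l in at_top.
      l / ((2 + log 2 (l / c) / real r) ^ r * ln l) \<le> l / (Gamma_r_inv r (l / c) * ln l)"
    using eventually_gt_at_top[of "max c 1"]
  proof eventually_elim
    case (elim l)
    then have "l / c > 1" "ln l > 0"
      using assms by auto
    then show ?case
      using Gamma_r_inv(1)[of r "l / c"] Gamma_r_inv_le[of r "l / c"] elim assms
      by (intro divide_left_mono mult_right_mono mult_pos_pos) auto
  qed
qed

theorem mainTheorem12:
  fixes q1 r :: nat and s t :: real
  assumes "q1 \<ge> 2" and "s > 0" and "t > 0" and "r \<ge> 4"
  shows "((\<lambda>m. a_int2 q1 r m t / real m powr s) \<longlongrightarrow> 0) sequentially \<and>
         ((\<lambda>m. a_int1 q1 r m t / a_int2 q1 r m s) \<longlongrightarrow> 0) sequentially \<and>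
         ((\<lambda>m. ln (real m) powr t / a_int1 q1 r m s) \<longlongrightarrow> 0) sequentially"
proof -
  define G where "G l = Gamma_r_inv r (l / ln (real q1))" for l
  have q1: "ln (real q1) > 0" and r: "r > 0"
    using assms by auto
  have G: "filterlim G at_top at_top"
    unfolding G_def
    by (rule filterlim_compose[OF Gamma_r_inv_at_top[OF r]]) (use q1 in real_asymp)
  have slow: "filterlim (\<lambda>l. l / (G l * ln l)) at_top at_top"
    unfolding G_def by (rule Gamma_r_inv_slow_growth[OF r q1])
  have p: "0 < (real r - 2) / real r" "(real r - 2) / real r < 1"
    using assms by auto
  have along_nat: "((\<lambda>m. f (real m)) \<longlongrightarrow> 0) sequentially"
    if "(f \<longlongrightarrow> 0) at_top" for f :: "real \<Rightarrow> real"
    using filterlim_compose[OF that filterlim_real_sequentially] .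
  show ?thesis
    using along_nat[OF powr_div_powr_tendsto_0[OF G p(1) \<open>s > 0\<close>, of t]]
      along_nat[OF powr_div_powr_powr_tendsto_0[OF G slow p(2) \<open>s > 0\<close>, of t]]
      along_nat[OF ln_powr_div_powr_tendsto_0[OF slow \<open>s > 0\<close>, of t]]
    by (simp add: a_int1_def a_int2_def G_def)
qed

end
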